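(* For $i\in\{0,1\}$ and $m\ge0$, $$\Psi^{-1}\big(P_{\Lambda_0}^{\Lambda_i}(w_m)\big)=\{(\mu_1,\dots,\mu_l)\in\mathcal{Y}(0):\ \text{the parts }\mu_k\text{ are distinct and all odd (if }i=0\text{) resp. all even (if }i=1\text{)},\ \mu_1\le m\},$$ where $P_{\Lambda_0}^{\Lambda_i}(w_m)$ is the set of $\Lambda_i$-dominant LS paths of shape $\Lambda_0$ whose initial direction is $\le w_m$ in Bruhat order.
   Context: Notation as follows. $\widehat{\mathfrak{sl}_2}$: affine Kac–Moody algebra, simple roots $\alpha_0,\alpha_1$, fundamental weights $\Lambda_0,\Lambda_1$, Weyl group $W=\langle s_0,s_1\rangle$; $s_j:=s_{j\bmod 2}$ and $w_k:=s_{k-1}\cdots s_1s_0$ ($w_0=1$); these are the minimal coset representatives of $W/W_{\Lambda_0}$ and $w_m>w_n$ in Bruhat order iff $m>n$. An LS path of shape $\Lambda_0$ is written $\pi=(\sigma_1>\dots>\sigma_r;\,0=a_0<a_1<\dots<a_r=1)$; $\sigma_1$ is its initial direction; its turning points are $\sum_{k\le j}(a_k-a_{k-1})\sigma_k\Lambda_0$ for $0\le j\le r$; $\pi$ is $\lambda$-dominant if $\lambda+\gamma$ is dominant for every turning point $\gamma$. $\mathcal{Y}(0)$ is the set of partitions with distinct nonzero parts (regular charged partitions of charge $0$). For $b=(\mu_1>\dots>\mu_l>0)$ put $m=\mu_1$, $n=l$, $\tilde b=(\mu_1-n,\mu_2-(n-1),\dots,\mu_l-1)$, and let the conjugate of $\tilde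 b$ be $(i_{n+1}\ge\dots\ge i_m)$. Then $\Psi(b)=(w_m>w_{m-1}>\dots>w_n;\ 0<\tfrac{i_m}{m}<\dots<\tfrac{i_{n+1}}{n+1}<1)$, and $\Psi(\emptyset)=(1;0<1)$. *)

theory Defs
  imports Complex_Main "HOL-Library.Product_Plus"
begin

text \<open>Concrete model of the real weight space of affine sl_2: a weight is written in
 the basis Lambda_0, Lambda_1, delta, i.e. as a triple (c0, c1, d) meaning
 c0 Lambda_0 + c1 Lambda_1 + d delta (rational coefficients suffice for LS paths).\<close>

type_synonym wt = "rat \<times> rat \<times> rat"

definition smultw :: "rat \<Rightarrow> wt \<Rightarrow> wt" where
  "smultw c w = (case w of (a, b, d) \<Rightarrow> (c * a, c * b, c * d))"

definition Lam :: "nat \<Rightarrow> wt" where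
  "Lam i = (if i mod 2 = 0 then (1, 0, 0) else (0, 1, 0))"

text \<open>Simple roots: alpha_0 = 2 Lambda_0 - 2 Lambda_1 + delta, alpha_1 = 2 Lambda_1 - 2 Lambda_0;
 indices taken mod 2 (s_j := s_{j mod 2}).\<close>
definition sroot :: "nat \<Rightarrow> wt" where
  "sroot j = (if j mod 2 = 0 then (2, -2, 1) else (-2, 2, 0))"

definition copair :: "nat \<Rightarrow> wt \<Rightarrow> rat" where
  "copair j w = (case w of (a, b, d) \<Rightarrow> if j mod 2 = 0 then a else b)"

definition sref :: "nat \<Rightarrow> wt \<Rightarrow> wt" where
  "sref j w = w - smultw (copair j w) (sroot j)"

fun wact :: "nat \<Rightarrow> wt \<Rightarrow> wt" where
  "wact 0 w = w"
| "wact (Suc k) w = sref k (wact k w)"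

definition dominant :: "wt \<Rightarrow> bool" where
  "dominant w \<longleftrightarrow> copair 0 w \<ge> 0 \<and> copair 1 w \<ge> 0"

text \<open>An LS path of shape Lambda_0 (sigma_1 > ... > sigma_r; 0 < a_1 < ... < a_r = 1) is
 represented as a pair (ks, as) with sigma_j = w_(ks!(j-1)) (the minimal coset
 representatives of W/W_Lambda0, Bruhat order = order of indices) and a_j = as!(j-1).\<close>
type_synonym lspath = "nat list \<times> rat list"

text \<open>Since W/W_Lambda0 is the chain
 w_0 < w_1 < ..., with covers w_(k+1) = s_k w_k, an a-chain for (w_p, w_q), p > q,
 exists iff a * <w_k Lambda_0, alpha_k^vee> is an integer for all q <= k < p.\<close>
definition a_chain :: "rat \<Rightarrow> nat \<Rightarrow> nat \<Rightarrow> bool" where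
  "a_chain a p q \<longleftrightarrow> q < p \<and> (\<forall>k. q \<le> k \<and> k < p \<longrightarrow> a * copair k (wact k (Lam 0)) \<in> \<int>)"

definition is_LS :: "lspath \<Rightarrow> bool" where
  "is_LS \<pi> \<longleftrightarrow> (case \<pi> of (ks, as) \<Rightarrow>
      ks \<noteq> [] \<and> length as = length ks \<and> sorted_wrt (>) ks \<and>
      sorted_wrt (<) (0 # as) \<and> last as = 1 \<and>
      (\<forall>j. 0 < j \<and> j < length ks \<longrightarrow> a_chain (as ! (j - 1)) (ks ! (j - 1)) (ks ! j)))"

definition turning :: "lspath \<Rightarrow> nat \<Rightarrow> wt" where
  "turning \<pi> j = (\<Sum>t<j. smultw (snd \<pi> ! t - (if t = 0 then 0 else snd \<pi> ! (t - 1)))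
                                (wact (fst \<pi> ! t) (Lam 0)))"

definition lam_dominant :: "wt \<Rightarrow> lspath \<Rightarrow> bool" where
  "lam_dominant lam \<pi> \<longleftrightarrow> (\<forall>j \<le> length (fst \<pi>). dominant (lam + turning \<pi> j))"

definition Pdom :: "nat \<Rightarrow> nat \<Rightarrow> lspath set" where
  "Pdom i m = {\<pi>. is_LS \<pi> \<and> lam_dominant (Lam i) \<pi> \<and> hd (fst \<pi>) \<le> m}"

definition Y0 :: "nat list set" where
  "Y0 = {b. sorted_wrt (>) b \<and> (\<forall>x \<in> set b. 0 < x)}"

text \<open>The map Psi. For b = (mu_1 > ... > mu_n), m = mu_1 (0 if b empty),
 tilde b_k = mu_k - (n - k + 1), and i_(n+j) = #{k. tilde b_k >= j} (conjugate).\<close>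
definition Psi :: "nat list \<Rightarrow> lspath" where
  "Psi b = (let m = (if b = [] then 0 else hd b); n = length b;
               ic = (\<lambda>j. card {k. k < n \<and> b ! k - (n - k) \<ge> j})
            in (rev [n..<Suc m],
                map (\<lambda>t. of_nat (ic (t - n)) / of_nat t) (rev [Suc n..<Suc m]) @ [1]))"

end

theory Submission
  imports Defs
begin

text \<open>Let \<open>b = (\<mu>\<^sub>1 > \<dots> > \<mu>\<^sub>n)\<close> and \<open>m = \<mu>\<^sub>1\<close>. The directions of \<open>\<Psi>(b)\<close> are
  \<open>w\<^sub>m > \<dots> > w\<^sub>n\<close>, and the turning point at which the direction \<open>w\<^sub>s\<close> begins pairs
  with \<open>\<alpha>\<^sub>j\<^sup>\<vee>\<close> to \<open>(-1)\<^sup>j S(s) + [j + s even] i\<^sub>s/s\<close>, where \<open>i\<^sub>s\<close> is the conjugate entry and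
  \<open>S(s)\<close> is the sum of \<open>(-1)\<^bsup>\<mu>\<^sub>k + k\<^esup>\<close> over the \<open>i\<^sub>s\<close> largest parts (indexing from
  \<open>k = 0\<close>).
  As \<open>0 \<le> i\<^sub>s/s \<le> 1\<close>, \<open>\<Lambda>\<^sub>i\<close>-dominance becomes a pair of bounds on the integer
  \<open>S(s) - i\<close>. If all parts have the parity of \<open>i + 1\<close>, then \<open>S(s) - i\<close> only takes the values
  \<open>0\<close> and \<open>-1\<close> and the bounds hold. Conversely, going down from \<open>s = m + 1\<close>, the bounds
  admit at most one new part \<open>\<mu>\<^sub>k\<close> with \<open>\<mu>\<^sub>k + k = s\<close> at each step and force it to have
  that parity.\<close>

lemma copair_add: "copair j (v + w) = copair j v + copair j w"
  and copair_diff: "copair j (v - w) = copair j v - copair j w"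
  and copair_smultw: "copair j (smultw c w) = c * copair j w"
  by (cases v, cases w, simp add: copair_def smultw_def)+

lemma copair_sroot: "copair j (sroot k) = (if even (j + k) then 2 else -2)"
  by (simp add: copair_def sroot_def) presburger

lemma copair_Lam: "copair j (Lam i) = (if even (j + i) then 1 else 0)"
  by (simp add: copair_def Lam_def) presburger

lemma copair_sref: "copair j (sref k w) = copair j w - copair k w * copair j (sroot k)"
  by (simp add: sref_def copair_diff copair_smultw)

lemma copair_wact_Lam0:
  "copair j (wact k (Lam 0)) = (if even (j + k) then of_nat k + 1 else - of_nat k)"
  by (induction k arbitrary: j) (auto simp: copair_sref copair_sroot copair_Lam)

lemma a_chain_Suc_iff: "a_chain a (Suc s) s \<longleftrightarrow> a * (of_nat s + 1) \<in> \<int>"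
proof -
  have "s \<le> k \<and> k < Suc s \<longleftrightarrow> k = s" for k by auto
  then show ?thesis unfolding a_chain_def by (simp add: copair_wact_Lam0)
qed

lemma copair_zero: "copair j 0 = 0"
  by (simp add: copair_def zero_prod_def)

lemma turning_0: "turning \<pi> 0 = 0"
  by (simp add: turning_def)

lemma turning_Suc:
  "turning \<pi> (Suc r) = turning \<pi> r +
     smultw (snd \<pi> ! r - (if r = 0 then 0 else snd \<pi> ! (r - 1))) (wact (fst \<pi> ! r) (Lam 0))"
  by (simp add: turning_def)

lemma downward_closed_eq_lessThan_card:
  fixes S :: "nat set"
  assumes "finite S" and "\<And>k j. k \<in> S \<Longrightarrow> j \<le> k \<Longrightarrow> j \<in> S"
  shows "S = {..<card S}"
proof (cases "S = {}")
  case False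
  have "S = {..Max S}"
    using assms Max_in[OF assms(1) False] by (auto intro: Max_ge)
  then show ?thesis
    by (metis card_atMost lessThan_Suc_atMost)
qed simp

lemma sorted_gt_nth_add_antimono:
  assumes "sorted_wrt (>) b" and "k \<le> j" and "j < length b"
  shows "b ! j + j \<le> b ! k + k"
  using assms(2,3)
proof (induction j rule: dec_induct)
  case (step j)
  have "b ! Suc j < b ! j"
    using sorted_wrt_nth_less[OF assms(1)] step.prems by simp
  then show ?case using step by simp
qed simp

text \<open>With 0-based indices the parts of \<open>b\<close>-tilde are \<open>b ! k - (length b - k)\<close>, so for
  \<open>t \<ge> length b\<close> this is the entry \<open>i\<^sub>t\<close> of the conjugate partition in the definition of \<open>Psi\<close>.\<close>
definition conj_count :: "nat list \<Rightarrow> nat \<Rightarrow> nat" where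
  "conj_count b t = card {k. k < length b \<and> t \<le> b ! k + k}"

definition Psi_coeff :: "nat list \<Rightarrow> nat \<Rightarrow> rat" where
  "Psi_coeff b t = of_nat (conj_count b t) / of_nat t"

definition sign_sum :: "nat list \<Rightarrow> nat \<Rightarrow> int" where
  "sign_sum b t = (\<Sum>k<conj_count b t. (-1) ^ (b ! k + k))"

lemma conj_count_le_length: "conj_count b t \<le> length b"
proof -
  have "conj_count b t \<le> card {..<length b}"
    unfolding conj_count_def by (intro card_mono) auto
  then show ?thesis by simp
qed

lemma conj_count_antimono: "t \<le> t' \<Longrightarrow> conj_count b t' \<le> conj_count b t"
  unfolding conj_count_def by (intro card_mono) auto

lemma Psi_coeff_nonneg: "0 \<le> Psi_coeff b t"
  by (simp add: Psi_coeff_def)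

lemma Psi_coeff_mult: "0 < t \<Longrightarrow> Psi_coeff b t * of_nat t = of_nat (conj_count b t)"
  by (simp add: Psi_coeff_def)

lemma sum_alternating_parity:
  assumes "i \<le> 1" and "\<forall>k<c. odd (f k + i)"
  shows "(\<Sum>k<c. (-1::int) ^ (f k + k)) = int i - (if odd (c + i) then 1 else 0)"
  using assms(2)
proof (induction c)
  case 0
  then show ?case using assms(1) by (cases i) auto
next
  case (Suc c)
  then have "(-1::int) ^ (f c + c) = (if even (c + i) then -1 else 1)"
    by (auto simp: minus_one_power_iff)
  with Suc show ?case by auto
qed

text \<open>For \<open>i \<le> 1\<close>, the condition that \<open>Lam i\<close> plus the turning point of \<open>Psi b\<close> at which
  the direction \<open>w\<^sub>s\<close> begins is dominant (lemma \<open>lam_dominant_Psi_iff\<close>).\<close>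
definition turning_bounds :: "nat \<Rightarrow> nat list \<Rightarrow> nat \<Rightarrow> bool" where
  "turning_bounds i b s \<longleftrightarrow>
     -1 - (if even s then Psi_coeff b s else 0) \<le> of_int (sign_sum b s - int i) \<and>
     of_int (sign_sum b s - int i) \<le> (if odd s then Psi_coeff b s else 0)"

lemma turning_bounds_if_parity:
  assumes "i \<le> 1" and "\<forall>x \<in> set b. odd (x + i)"
  shows "turning_bounds i b s"
proof -
  have "\<forall>k < conj_count b s. odd (b ! k + i)"
    using assms(2) conj_count_le_length[of b s] by auto
  then have "sign_sum b s - int i = - (if odd (conj_count b s + i) then 1 else 0)"
    using sum_alternating_parity[OF assms(1)] by (simp add: sign_sum_def)
  then show ?thesis
    using Psi_coeff_nonneg[of b s] by (auto simp: turning_bounds_def)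
qed

context
  fixes b :: "nat list"
  assumes b_Y0: "b \<in> Y0"
begin

lemma Y0_sorted: "sorted_wrt (>) b"
  using b_Y0 by (simp add: Y0_def)

lemma length_le_nth_add: "k < length b \<Longrightarrow> length b \<le> b ! k + k"
proof -
  assume k: "k < length b"
  have "b ! (length b - 1) + (length b - 1) \<le> b ! k + k"
    using sorted_gt_nth_add_antimono[OF Y0_sorted, of k "length b - 1"] k by simp
  moreover have "0 < b ! (length b - 1)"
    using b_Y0 k by (simp add: Y0_def)
  ultimately show ?thesis by linarith
qed

lemma conj_count_iff: "k < conj_count b t \<longleftrightarrow> k < length b \<and> t \<le> b ! k + k"
proof -
  have "{k. k < length b \<and> t \<le> b ! k + k} = {..<conj_count b t}"
    unfolding conj_count_def
    using sorted_gt_nth_add_antimono[OF Y0_sorted]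
    by (intro downward_closed_eq_lessThan_card) (auto intro: le_trans)
  then show ?thesis by blast
qed

lemma conj_count_eq_length: "t \<le> length b \<Longrightarrow> conj_count b t = length b"
proof -
  assume "t \<le> length b"
  then have "{k. k < length b \<and> t \<le> b ! k + k} = {..<length b}"
    using length_le_nth_add by force
  then show ?thesis by (simp add: conj_count_def)
qed

lemma conj_count_eq_0: "hd b < t \<Longrightarrow> conj_count b t = 0"
proof -
  assume "hd b < t"
  moreover have "b ! k + k \<le> hd b" if "k < length b" for k
    using sorted_gt_nth_add_antimono[OF Y0_sorted, of 0 k] that by (cases b) auto
  ultimately show ?thesis
    unfolding conj_count_def by (metis (no_types, lifting) card.empty empty_Collect_eq leD le_trans)
qed

lemma sign_sum_Suc:
  "sign_sum b t = sign_sum b (Suc t) + (-1) ^ t * int (conj_count b t - conj_count b (Suc t))"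
proof -
  let ?c = "conj_count b" and ?f = "\<lambda>k. (-1::int) ^ (b ! k + k)"
  have le: "?c (Suc t) \<le> ?c t" by (rule conj_count_antimono) simp
  have "b ! k + k = t" if "k \<in> {?c (Suc t)..<?c t}" for k
    using that conj_count_iff[of k t] conj_count_iff[of k "Suc t"] by auto
  then have "(\<Sum>k\<in>{?c (Suc t)..<?c t}. ?f k) = (\<Sum>k\<in>{?c (Suc t)..<?c t}. (-1) ^ t)"
    by simp
  then show ?thesis
    unfolding sign_sum_def using sum.atLeastLessThan_concat[of 0 "?c (Suc t)" "?c t" ?f] le
    by (simp add: atLeast0LessThan mult.commute)
qed

lemma conj_count_parity_step:
  assumes "i \<le> 1" and "length b \<le> s" and bounds: "turning_bounds i b s"
    and IH: "\<forall>k < conj_count b (Suc s). odd (b ! k + i)"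
  shows "\<forall>k < conj_count b s. odd (b ! k + i)"
proof -
  let ?c = "conj_count b s" and ?c' = "conj_count b (Suc s)"
  define d where "d = ?c - ?c'"
  have c'_le: "?c' \<le> s"
    using conj_count_le_length[of b "Suc s"] assms(2) by simp
  have "sign_sum b (Suc s) - int i = - (if odd (?c' + i) then 1 else 0)"
    using sum_alternating_parity[OF assms(1) IH] by (simp add: sign_sum_def)
  then have G: "sign_sum b s - int i = - (if odd (?c' + i) then 1 else 0) + (-1) ^ s * int d"
    using sign_sum_Suc[of s] by (simp add: d_def)
  have d: "d \<le> 1 \<and> (d = 1 \<longrightarrow> odd (s - ?c' + i))"
  proof (cases "even s")
    case True
    then have "sign_sum b s - int i \<le> 0" using bounds by (simp add: turning_bounds_def)
    then show ?thesis using G True c'_le by (auto split: if_splits)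
  next
    case False
    then have "-1 \<le> sign_sum b s - int i" using bounds by (simp add: turning_bounds_def)
    then show ?thesis using G False c'_le by (auto split: if_splits)
  qed
  show ?thesis
  proof (intro allI impI)
    fix k assume k: "k < ?c"
    show "odd (b ! k + i)"
    proof (cases "k < ?c'")
      case False
      then have "b ! k + k = s" and "k = ?c'" and "d = 1"
        using k d conj_count_iff[of k s] conj_count_iff[of k "Suc s"]
        by (auto simp: d_def)
      then have "b ! k = s - ?c'" and "d = 1" by simp_all
      then show ?thesis using d by simp
    qed (use IH in simp)
  qed
qed

context
  assumes ne: "b \<noteq> []"
begin

lemma length_le_hd: "length b \<le> hd b"
  using length_le_nth_add[of 0] ne by (simp add: hd_conv_nth)

lemma conj_count_pos: "t \<le> hd b \<Longrightarrow> 0 < conj_count b t"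
  using conj_count_iff[of 0 t] ne by (simp add: hd_conv_nth)

lemma Psi_coeff_length: "Psi_coeff b (length b) = 1"
  using ne by (simp add: Psi_coeff_def conj_count_eq_length)

lemma Psi_coeff_strict_antimono:
  assumes "length b \<le> t" "t < t'" "t' \<le> hd b"
  shows "Psi_coeff b t' < Psi_coeff b t"
proof -
  have "conj_count b t' * t \<le> conj_count b t * t"
    using conj_count_antimono assms(2) by simp
  also have "\<dots> < conj_count b t * t'"
    using assms conj_count_pos[of t] by simp
  finally have "(of_nat (conj_count b t') * of_nat t :: rat) < of_nat (conj_count b t) * of_nat t'"
    by (metis of_nat_less_iff of_nat_mult)
  moreover have "0 < t" using assms ne by (cases b) auto
  ultimately show ?thesis
    using assms(2) by (simp add: Psi_coeff_def divide_less_eq field_simps)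
qed

lemma Psi_eq:
  "Psi b = (rev [length b..<Suc (hd b)], map (Psi_coeff b) (rev [length b..<Suc (hd b)]))"
proof -
  let ?n = "length b" and ?m = "hd b"
  have nm: "?n \<le> ?m" by (rule length_le_hd)
  have upt: "rev [?n..<Suc ?m] = rev [Suc ?n..<Suc ?m] @ [?n]"
    using nm by (simp add: upt_conv_Cons del: upt_Suc)
  have "of_nat (card {k. k < ?n \<and> t - ?n \<le> b ! k - (?n - k)}) / of_nat t = Psi_coeff b t"
    if "?n \<le> t" for t
  proof -
    have "{k. k < ?n \<and> t - ?n \<le> b ! k - (?n - k)} = {k. k < ?n \<and> t \<le> b ! k + k}"
      using that length_le_nth_add by force
    then show ?thesis by (simp add: Psi_coeff_def conj_count_def)
  qed
  then show ?thesis
    unfolding Psi_def Let_def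
    using ne Psi_coeff_length by (simp add: upt del: upt_Suc)
qed

lemma length_Psi: "length (fst (Psi b)) = Suc (hd b - length b)"
  "length (snd (Psi b)) = Suc (hd b - length b)"
  using length_le_hd by (simp_all add: Psi_eq del: upt_Suc)

lemma nth_Psi:
  assumes "r \<le> hd b - length b"
  shows "fst (Psi b) ! r = hd b - r" "snd (Psi b) ! r = Psi_coeff b (hd b - r)"
  using assms length_le_hd by (simp_all add: Psi_eq rev_nth del: upt_Suc)

lemma hd_fst_Psi: "hd (fst (Psi b)) = hd b"
proof -
  have "fst (Psi b) \<noteq> []" using length_Psi(1) by auto
  then show ?thesis using nth_Psi(1)[of 0] by (simp add: hd_conv_nth)
qed

lemma is_LS_Psi: "is_LS (Psi b)"
proof -
  let ?n = "length b" and ?m = "hd b"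
  let ?ts = "rev [?n..<Suc ?m]"
  have nm: "?n \<le> ?m" by (rule length_le_hd)
  have n_pos: "0 < ?n" using ne by simp
  have sorted_ks: "sorted_wrt (>) (fst (Psi b))"
    by (simp add: Psi_eq sorted_wrt_rev del: upt_Suc)
  have "Psi_coeff b t' < Psi_coeff b t" if "t \<in> set [?n..<Suc ?m]" "t' \<in> set [?n..<Suc ?m]" "t < t'"
    for t t'
    using that by (intro Psi_coeff_strict_antimono) auto
  then have "sorted_wrt (\<lambda>t t'. Psi_coeff b t' < Psi_coeff b t) [?n..<Suc ?m]"
    by (rule sorted_wrt_mono_rel[OF _ sorted_wrt_upt])
  moreover have "0 < Psi_coeff b t" if "?n \<le> t" "t \<le> ?m" for t
    using less_le_trans[OF n_pos that(1)] conj_count_pos[OF that(2)]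
    by (simp add: Psi_coeff_def zero_less_divide_iff)
  ultimately have sorted_as: "sorted_wrt (<) (0 # snd (Psi b))"
    by (auto simp: Psi_eq sorted_wrt_map sorted_wrt_rev simp del: upt_Suc)
  have last_as: "last (snd (Psi b)) = 1"
    using nm Psi_coeff_length
    by (simp add: Psi_eq last_map last_rev del: upt_Suc)
  have "a_chain (snd (Psi b) ! (j - 1)) (fst (Psi b) ! (j - 1)) (fst (Psi b) ! j)"
    if "0 < j" "j < length (fst (Psi b))" for j
  proof -
    define s where "s = ?m - j"
    have j: "j \<le> ?m - ?n" using that length_Psi by simp
    then have "?m - (j - 1) = Suc s" using that nm by (simp add: s_def)
    then have "fst (Psi b) ! (j - 1) = Suc s" "snd (Psi b) ! (j - 1) = Psi_coeff b (Suc s)"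
      using nth_Psi[of "j - 1"] j by simp_all
    moreover have "fst (Psi b) ! j = s" using nth_Psi[of j] j by (simp add: s_def)
    moreover have "Psi_coeff b (Suc s) * (of_nat s + 1) = of_nat (conj_count b (Suc s))"
      using Psi_coeff_mult[of "Suc s" b] by (simp add: add.commute)
    ultimately show ?thesis by (simp add: a_chain_Suc_iff)
  qed
  moreover have "fst (Psi b) \<noteq> []" "length (snd (Psi b)) = length (fst (Psi b))"
    using length_Psi by auto
  ultimately show ?thesis
    unfolding is_LS_def case_prod_beta using sorted_ks sorted_as last_as by blast
qed

lemma turning_Psi_Suc:
  assumes "length b \<le> s" "s \<le> hd b"
  shows "turning (Psi b) (Suc (hd b - s)) =
    turning (Psi b) (hd b - s) + smultw (Psi_coeff b s - Psi_coeff b (Suc s)) (wact s (Lam 0))"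
proof -
  let ?r = "hd b - s"
  have "(if ?r = 0 then 0 else snd (Psi b) ! (?r - 1)) = Psi_coeff b (Suc s)"
  proof (cases "?r = 0")
    case True
    then show ?thesis
      using assms conj_count_eq_0[of "Suc s"] by (simp add: Psi_coeff_def)
  next
    case False
    then show ?thesis
      using assms nth_Psi(2)[of "?r - 1"] by (simp add: Suc_diff_Suc)
  qed
  then show ?thesis
    using assms nth_Psi[of ?r] by (simp add: turning_Suc)
qed

text \<open>Turning point number \<open>Suc (hd b) - s\<close> is the one at which the direction \<open>w\<^sub>s\<close> begins.\<close>
lemma copair_turning_Psi:
  assumes "length b \<le> s" "s \<le> Suc (hd b)"
  shows "copair j (turning (Psi b) (Suc (hd b) - s)) =
    (-1) ^ j * of_int (sign_sum b s) + (if even (j + s) then Psi_coeff b s else 0)"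
  using assms(2,1)
proof (induction s rule: inc_induct)
  case base
  then show ?case
    using conj_count_eq_0[of "Suc (hd b)"]
    by (simp add: turning_0 copair_zero sign_sum_def Psi_coeff_def)
next
  case (step s)
  let ?a = "Psi_coeff b s" and ?a' = "Psi_coeff b (Suc s)"
  let ?c = "conj_count b s" and ?c' = "conj_count b (Suc s)"
  let ?G' = "(-1) ^ j * of_int (sign_sum b (Suc s)) :: rat"
  have s_pos: "0 < s" using step ne by (cases b) auto
  have a: "?a * of_nat s = of_nat ?c" and a': "?a' * of_nat s + ?a' = of_nat ?c'"
    using Psi_coeff_mult[OF s_pos] Psi_coeff_mult[of "Suc s" b] by (simp_all add: algebra_simps)
  have "of_int (sign_sum b s) = of_int (sign_sum b (Suc s)) + (-1) ^ s * (of_nat ?c - (of_nat ?c' :: rat))"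
    using sign_sum_Suc[of s] conj_count_antimono[of s "Suc s" b] by (simp add: of_nat_diff)
  then have G: "(-1) ^ j * of_int (sign_sum b s) = ?G' + (-1) ^ (j + s) * (of_nat ?c - (of_nat ?c' :: rat))"
    by (simp add: power_add ring_distribs mult.assoc)
  have "copair j (turning (Psi b) (Suc (hd b) - s)) =
      copair j (turning (Psi b) (Suc (hd b) - Suc s)) + (?a - ?a') * copair j (wact s (Lam 0))"
    using step turning_Psi_Suc[of s] by (simp add: Suc_diff_le copair_add copair_smultw)
  also have "copair j (turning (Psi b) (Suc (hd b) - Suc s)) =
      ?G' + (if even (j + Suc s) then ?a' else 0)"
    using step by simp
  finally have rec: "copair j (turning (Psi b) (Suc (hd b) - s)) =
      ?G' + (if even (j + Suc s) then ?a' else 0) + (?a - ?a') * copair j (wact s (Lam 0))" .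
  show ?case
  proof (cases "even (j + s)")
    case True
    have "copair j (turning (Psi b) (Suc (hd b) - s)) = ?G' + (?a - ?a') * (of_nat s + 1)"
      using rec True by (simp add: copair_wact_Lam0)
    also have "\<dots> = ?G' + (of_nat ?c - of_nat ?c') + ?a"
      using a a' by (simp add: algebra_simps)
    also have "\<dots> = (-1) ^ j * of_int (sign_sum b s) + ?a"
      using G True by simp
    finally show ?thesis using True by simp
  next
    case False
    have "copair j (turning (Psi b) (Suc (hd b) - s)) = ?G' + ?a' - (?a - ?a') * of_nat s"
      using rec False by (simp add: copair_wact_Lam0)
    also have "\<dots> = ?G' - (of_nat ?c - of_nat ?c')"
      using a a' by (simp add: algebra_simps)
    also have "\<dots> = (-1) ^ j * of_int (sign_sum b s)"
      using G False by simp
    finally show ?thesis using False by simp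
  qed
qed

lemma lam_dominant_Psi_iff:
  assumes "i \<le> 1"
  shows "lam_dominant (Lam i) (Psi b) \<longleftrightarrow>
    (\<forall>s. length b \<le> s \<and> s \<le> Suc (hd b) \<longrightarrow> turning_bounds i b s)"
proof -
  let ?n = "length b" and ?m = "hd b"
  have nm: "?n \<le> ?m" by (rule length_le_hd)
  have dom: "dominant (Lam i + turning (Psi b) (Suc ?m - s)) \<longleftrightarrow> turning_bounds i b s"
    if "?n \<le> s" "s \<le> Suc ?m" for s
    using copair_turning_Psi[OF that, of 0] copair_turning_Psi[OF that, of 1] assms
    by (cases i) (auto simp: dominant_def turning_bounds_def copair_add copair_Lam algebra_simps)
  have "(\<forall>j \<le> Suc (?m - ?n). dominant (Lam i + turning (Psi b) j)) \<longleftrightarrow>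
        (\<forall>s. ?n \<le> s \<and> s \<le> Suc ?m \<longrightarrow> dominant (Lam i + turning (Psi b) (Suc ?m - s)))"
  proof safe
    fix j assume "\<forall>s. ?n \<le> s \<and> s \<le> Suc ?m \<longrightarrow> dominant (Lam i + turning (Psi b) (Suc ?m - s))"
      and "j \<le> Suc (?m - ?n)"
    moreover have "?n \<le> Suc ?m - j" and "Suc ?m - (Suc ?m - j) = j"
      using \<open>j \<le> Suc (?m - ?n)\<close> nm by auto
    ultimately show "dominant (Lam i + turning (Psi b) j)"
      by (metis diff_le_self)
  qed (use nm in auto)
  then show ?thesis
    using dom by (simp add: lam_dominant_def length_Psi)
qed

lemma parity_if_turning_bounds:
  assumes "i \<le> 1" and bounds: "\<forall>s. length b \<le> s \<and> s \<le> hd b \<longrightarrow> turning_bounds i b s"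
  shows "\<forall>x \<in> set b. odd (x + i)"
proof -
  have "\<forall>k < conj_count b s. odd (b ! k + i)" if "length b \<le> s" "s \<le> Suc (hd b)" for s
    using that(2,1)
  proof (induction s rule: inc_induct)
    case base
    then show ?case using conj_count_eq_0[of "Suc (hd b)"] by simp
  next
    case (step s)
    then show ?case using conj_count_parity_step[OF assms(1)] bounds by simp
  qed
  from this[of "length b"] have "\<forall>k < length b. odd (b ! k + i)"
    using length_le_hd conj_count_eq_length[of "length b"] by simp
  then show ?thesis by (metis in_set_conv_nth)
qed

end

end

lemma Psi_Nil: "Psi [] = ([0], [1])"
  by (simp add: Psi_def)

lemma lam_dominant_Psi_Nil: "lam_dominant (Lam i) (Psi [])"
proof -
  have "turning (Psi []) 1 = Lam 0"
    by (simp add: Psi_Nil turning_def smultw_def Lam_def)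
  then have "dominant (Lam i + turning (Psi []) j)" if "j \<le> 1" for j
    using that by (cases j) (auto simp: turning_0 dominant_def copair_add copair_Lam)
  then show ?thesis by (simp add: lam_dominant_def Psi_Nil)
qed

lemma lam_dominant_Psi_iff_parity:
  assumes "b \<in> Y0" and "i \<le> 1"
  shows "lam_dominant (Lam i) (Psi b) \<longleftrightarrow> (\<forall>x \<in> set b. odd (x + i))"
proof (cases "b = []")
  case True
  then show ?thesis using lam_dominant_Psi_Nil by simp
next
  case False
  show ?thesis
    unfolding lam_dominant_Psi_iff[OF assms(1) False assms(2)]
    using turning_bounds_if_parity[OF assms(2)] parity_if_turning_bounds[OF assms(1) False assms(2)]
    by auto
qed

lemma Psi_in_Pdom_iff:
  assumes "b \<in> Y0" and "i \<le> 1"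
  shows "Psi b \<in> Pdom i m \<longleftrightarrow> (\<forall>x \<in> set b. odd (x + i)) \<and> (b \<noteq> [] \<longrightarrow> hd b \<le> m)"
proof (cases "b = []")
  case True
  then show ?thesis
    using lam_dominant_Psi_Nil by (simp add: Pdom_def Psi_Nil is_LS_def)
next
  case False
  then show ?thesis
    using is_LS_Psi[OF assms(1) False] hd_fst_Psi[OF assms(1) False] lam_dominant_Psi_iff_parity[OF assms]
    by (simp add: Pdom_def)
qed

theorem mainTheorem4:
  fixes i m :: nat
  assumes "i \<in> {0, 1}"
  shows "{b \<in> Y0. Psi b \<in> Pdom i m} =
         {b \<in> Y0. (\<forall>x \<in> set b. if i = 0 then odd x else even x) \<and> (b \<noteq> [] \<longrightarrow> hd b \<le> m)}"
proof -
  have "i \<le> 1" using assms by auto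
  moreover have "(if i = 0 then odd x else even x) \<longleftrightarrow> odd (x + i)" for x
    using assms by auto
  ultimately show ?thesis using Psi_in_Pdom_iff by auto
qed

end
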